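(* Let $(\Phi,\mathtt{Prg},\mathrm{AT})$ be a CLC SPL with feature model $\Phi=(\mathcal F,\phi)$, and let $p\subseteq\mathcal F$ be a valid product, i.e. $p\models\phi$. If $\phi\vdash \mathtt{Prg}\ \textsc{ok}$ (family-based typing), then $\vdash [\![\mathtt{Prg}]\!]_p\ \textsc{ok}$ (LC typing), i.e. the variant identified by $p$ is a well-typed LC program.
   Context: **Lightweight C (LC).** Types: $T ::= \mathtt{int}\mid \mathtt{void}* \mid \mathtt{struct}\ s*$ ($s$ a struct name). Expressions: $e ::= n$ (integer literal) $\mid \mathtt{NULL}\mid x$ (parameter name) $\mid f(e_1,\dots,e_k)$ ($k\ge0$) $\mid e\texttt{->}m \mid e\texttt{->}m=e \mid e\,?\,e:e \mid (e_1,\dots,e_k)$ ($k\ge1$, a parenthesized expression sequence) $\mid \mathsf{uop}\ e\mid e\ \mathsf{bop}\ e\mid \mathtt{MALLOC}(\mathtt{struct}\ s)\mid \mathtt{MFREE}(e)$. A struct definition is $\mathtt{struct}\ s\{T_1\,m_1;\dots;T_k\,m_k;\};$ (distinct member names); a function definition is $T_0\ f(T_1\,x_1,\dots,T_k\,x_k)\{\mathtt{return}\ e;\}$ (distinct parameter names); a program $\mathtt{Prg}=\overline{SD}\ \overline{FD}$ is a sequence of struct definitions followed by a sequence of function definitions, with distinct struct names and distinct function names. $\mathtt{Prg}$ is regarded as a finite map: $\mathtt{Prg}(s)$ is the definition of struct $s$, $\mathtt{Prg}(s)(m)=$ "$T\ m$" is the declaration of member $m$ in it, $\mathtt{Prg}(f)$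 is the definition of function $f$; $\mathrm{dom}(\overline{SD})$ is the set of defined struct names and $\mathrm{dom}(\mathtt{Prg})$ the set of defined struct and function names. $\mathtt{Prg}$ is *sane* if (1) every struct name occurring anywhere in $\mathtt{Prg}$ is defined in $\mathtt{Prg}$, (2) every function name occurring in the function definitions is defined in $\mathtt{Prg}$, (3) $\mathtt{Prg}(\mathtt{main})=\mathtt{int\ main}()\{\mathtt{return}\ e;\}$ for some $e$. Operator types: unary $-:(\mathtt{int})\to\mathtt{int}$; unary $!:(T)\to\mathtt{int}$ for every type $T$; binary $+,-,*,/,\&\&,||,<,<=,>,>=:(\mathtt{int},\mathtt{int})\to\mathtt{int}$; binary $==,!=:(T,T)\to\mathtt{int}$ for every type $T$. Subtyping $\le$ is the reflexive closure of $\mathtt{void}*\le\mathtt{struct}\ s*$ for every struct $s$ defined in the program; $\max_\le\{T_1,T_2\}$ is the greater of two $\le$-comparable types. LC typing (relative to the program under consideration; $\Gamma$ a finite map from parameter names to types): (T-prg) if $\mathtt{Prg}$ is sane, $\mathtt{Prg}=\overline{SD}\,\overline{FD}$ and $\vdash FD\ \textsc{ok}$ for every $FD$ in $\overline{FD}$, then $\vdash\mathtt{Prg}\ \textsc{ok}$. (T-fun) if $x_1{:}T_1,\dots,x_k{:}T_k\vdash e:T'$ and $T'\le T_0$ then $\vdash T_0\,f(T_1x_1,\dots,T_kx_k)\{\mathtt{return}\ e;\}\ \textsc{ok}$. (T-int) $\Gamma\vdash n:\mathtt{int}$. (T-null) $\Gamma\vdash\mathtt{NULL}:\mathtt{void}*$.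 (T-par) if $x{:}T\in\Gamma$ then $\Gamma\vdash x:T$. (T-app) if $\mathtt{Prg}(f)=T_0\,f(T_1x_1,\dots,T_kx_k)\{\dots\}$, and $\Gamma\vdash e_i:T_i'$, $T_i'\le T_i$ for $i=1..k$ (exactly $k$ arguments), then $\Gamma\vdash f(e_1,\dots,e_k):T_0$. (T-member) if $\Gamma\vdash e_0:\mathtt{struct}\ s*$ and $\mathtt{Prg}(s)(m)=T\,m$ then $\Gamma\vdash e_0\texttt{->}m:T$. (T-assign) if additionally $\Gamma\vdash e_1:T_1$, $T_1\le T$, then $\Gamma\vdash e_0\texttt{->}m=e_1:T$. (T-cond) if $\Gamma\vdash e_j:T_j$ ($j=0,1,2$) and $T_3=\max_\le\{T_1,T_2\}$ then $\Gamma\vdash e_0?e_1:e_2:T_3$. (T-seq) if $\Gamma\vdash e_i:T_i$ for $i=1..n$ then $\Gamma\vdash(e_1,\dots,e_n):T_n$. (T-uop) if $\Gamma\vdash e_0:T_0$ and $\mathsf{uop}$ has type $(T_0)\to\mathtt{int}$ then $\Gamma\vdash\mathsf{uop}\,e_0:\mathtt{int}$. (T-bop) if $\Gamma\vdash e_1:T_1$, $\Gamma\vdash e_2:T_2$, $T_3=\max_\le\{T_1,T_2\}$ and $\mathsf{bop}$ has type $(T_3,T_3)\to\mathtt{int}$ then $\Gamma\vdash e_1\,\mathsf{bop}\,e_2:\mathtt{int}$. (T-malloc) if $s\in\mathrm{dom}(\overline{SD})$ then $\Gamma\vdash\mathtt{MALLOC}(\mathtt{struct}\ s):\mathtt{struct}\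 s*$. (T-mfree) if $\Gamma\vdash e_0:\mathtt{struct}\ s*$ then $\Gamma\vdash\mathtt{MFREE}(e_0):\mathtt{void}*$. **Colored LC (CLC).** A feature model $\Phi=(\mathcal F,\phi)$: $\mathcal F$ a finite set of features, $\phi$ a propositional formula over $\mathcal F$ (connectives $!,\&\&,||$, constants $0,1$). A product is $p\subseteq\mathcal F$; $p\models\psi$ means $\psi$ is true under the assignment giving 1 to features in $p$ and 0 to the others; $p$ is valid if $p\models\phi$. For formulas, $\theta\models\theta'$ means $\theta\Rightarrow\theta'$ is valid; $\psi_1\Rightarrow\psi_2$ abbreviates $!\psi_1||\psi_2$ and $\psi_1\Leftrightarrow\psi_2$ the conjunction of both implications. An SPL is a triple $(\Phi,\mathtt{Prg},\mathrm{AT})$ with $\mathtt{Prg}$ an LC program (the code base) and $\mathrm{AT}$ an annotation table assigning a propositional formula over $\mathcal F$ to each occurrence of an annotable fragment of $\mathtt{Prg}$; annotable fragments are: each struct definition, each member declaration $T\,m$, each function definition, each formal parameter declaration $T\,x$, each argument of a function call, and each element of a parenthesized sequence. Occurrences not explicitly annotated have annotation $1$. Abbreviations: $\mathrm{AT}(s)=\mathrm{AT}(\mathtt{Prg}(s))$ is the annotation of the definition of struct $s$, $\mathrm{AT}(f)=\mathrm{AT}(\mathtt{Prg}(f))$ that of function $f$; $\mathrm{AT}(\mathtt{int})=\mathrm{AT}(\mathtt{void}* )=1$, $\mathrm{AT}(\mathtt{struct}\ s* )=\mathrm{AT}(\mathtt{Prg}(s))$; for equal-length sequences, $\mathrm{AT}(\bar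 a)\odot\mathrm{AT}(\bar b)$ ($\odot\in\{\Rightarrow,\Leftrightarrow\}$) is the conjunction of $\mathrm{AT}(a_i)\odot\mathrm{AT}(b_i)$; $\exists(e_1,\dots,e_n)=\mathrm{AT}(e_1)||\cdots||\mathrm{AT}(e_n)$; $\mathtt{neverLast}(k,(e_1,\dots,e_n))=\,!\mathrm{AT}(e_k)||\mathrm{AT}(e_{k+1})||\cdots||\mathrm{AT}(e_n)$. An annotated type environment $\Delta$ maps parameter names to pairs written $x{:}T$ with $\psi$ ($T$ a type, $\psi$ a formula). Family-based typing of $(\Phi,\mathtt{Prg},\mathrm{AT})$: (FT-prg) if $\mathtt{Prg}$ is sane, $\mathrm{AT}(\mathtt{main})=1$, $\mathtt{Prg}=\overline{SD}\,\overline{FD}$, $\phi\,\&\&\,\mathrm{AT}(SD)\vdash SD\ \textsc{ok}$ for each $SD$ in $\overline{SD}$ and $\phi\,\&\&\,\mathrm{AT}(FD)\vdash FD\ \textsc{ok}$ for each $FD$ in $\overline{FD}$, then $\phi\vdash\mathtt{Prg}\ \textsc{ok}$. (FT-struct) if $\theta\models\mathrm{AT}(T_i\,m_i)\Rightarrow\mathrm{AT}(T_i)$ for all $i$, then $\theta\vdash\mathtt{struct}\ s\{T_1m_1;\dots;T_km_k;\}\ \textsc{ok}$. (FT-fun) if $\theta\models\mathrm{AT}(T_0)$, $\theta\models\mathrm{AT}(T_i\,x_i)\Rightarrow\mathrm{AT}(T_i)$ for all $i$, $\theta;\ x_1{:}T_1\text{ with }\mathrm{AT}(T_1x_1),\dots,x_k{:}T_k\text{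 with }\mathrm{AT}(T_kx_k)\vdash e:T'$ and $T'\le T_0$, then $\theta\vdash T_0\,f(T_1x_1,\dots,T_kx_k)\{\mathtt{return}\ e;\}\ \textsc{ok}$. (FT-int) $\theta;\Delta\vdash n:\mathtt{int}$. (FT-null) $\theta;\Delta\vdash\mathtt{NULL}:\mathtt{void}*$. (FT-par) if $x{:}T$ with $\psi$ is in $\Delta$ and $\theta\models\psi$ then $\theta;\Delta\vdash x:T$. (FT-app) if $\mathtt{Prg}(f)=T_0\,f(T_1x_1,\dots,T_kx_k)\{\dots\}$, $\theta\models\mathrm{AT}(\mathtt{Prg}(f))$, and for $i=1..k$ (exactly $k$ arguments) $\theta;\Delta\vdash e_i:T_i'$, $T_i'\le T_i$ and $\theta\models\mathrm{AT}(e_i)\Leftrightarrow\mathrm{AT}(T_ix_i)$, then $\theta;\Delta\vdash f(e_1,\dots,e_k):T_0$. (FT-member) if $\theta;\Delta\vdash e_0:\mathtt{struct}\ s*$, $\mathtt{Prg}(s)(m)=T\,m$ and $\theta\models\mathrm{AT}(T\,m)$ then $\theta;\Delta\vdash e_0\texttt{->}m:T$. (FT-assign) if additionally $\theta;\Delta\vdash e_1:T_1$ and $T_1\le T$ then $\theta;\Delta\vdash e_0\texttt{->}m=e_1:T$. (FT-cond), (FT-uop), (FT-bop), (FT-mfree): as T-cond, T-uop, T-bop, T-mfree with every judgment $\Gamma\vdash$ replaced by $\theta;\Delta\vdash$. (FT-seq) if $\theta\models\exists(e_1,\dots,e_n)$, $\theta\,\&\&\,\mathrm{AT}(e_i);\Delta\vdash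 e_i:T_i$ for all $i$, $T=T_n$, and $\theta\models\mathtt{neverLast}(i,(e_1,\dots,e_n))$ for every $i$ with $T_i\ne T$, then $\theta;\Delta\vdash(e_1,\dots,e_n):T$. (FT-malloc) if $s\in\mathrm{dom}(\overline{SD})$ and $\theta\models\mathrm{AT}(\mathtt{Prg}(s))$ then $\theta;\Delta\vdash\mathtt{MALLOC}(\mathtt{struct}\ s):\mathtt{struct}\ s*$. **Variant generation.** For a product $p$ and a sequence of annotable occurrences: $[\![\,]\!]_p$ is empty; $[\![a_1\dots a_n]\!]_p=\langle\!\langle a_1\rangle\!\rangle_p\,[\![a_2\dots a_n]\!]_p$ if $p\models\mathrm{AT}(a_1)$, and $=[\![a_2\dots a_n]\!]_p$ otherwise. $\langle\!\langle\mathtt{struct}\ s\{\overline{T\,m};\}\rangle\!\rangle_p=\mathtt{struct}\ s\{[\![\overline{T\,m}]\!]_p\}$; $\langle\!\langle T_0f(\overline{T\,x})\{\mathtt{return}\ e;\}\rangle\!\rangle_p=T_0f([\![\overline{T\,x}]\!]_p)\{\mathtt{return}\ \langle\!\langle e\rangle\!\rangle_p;\}$; $\langle\!\langle T\,m\rangle\!\rangle_p=T\,m$, $\langle\!\langle T\,x\rangle\!\rangle_p=T\,x$; $\langle\!\langle f(\bar e)\rangle\!\rangle_p=f([\![\bar e]\!]_p)$; $\langle\!\langle(\tilde e)\rangle\!\rangle_p=([\![\tilde e]\!]_p)$; on all other expression forms $\langle\!\langle\cdot\rangle\!\rangle_p$ acts homomorphically on immediate subexpressions ($n$, $\mathtt{NULL}$,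 $x$, $\mathtt{MALLOC}(\mathtt{struct}\ s)$ unchanged). The variant is $[\![\mathtt{Prg}]\!]_p=[\![\overline{SD}]\!]_p\,[\![\overline{FD}]\!]_p$ for $\mathtt{Prg}=\overline{SD}\,\overline{FD}$. *)

theory Defs
  imports Main
begin

datatype 'f form =
    FVar 'f
  | FNot "'f form"
  | FAnd "'f form" "'f form"
  | FOr "'f form" "'f form"
  | FFalse
  | FTrue

primrec fvars :: "'f form \<Rightarrow> 'f set" where
  "fvars (FVar x) = {x}"
| "fvars (FNot a) = fvars a"
| "fvars (FAnd a b) = fvars a \<union> fvars b"
| "fvars (FOr a b) = fvars a \<union> fvars b"
| "fvars FFalse = {}"
| "fvars FTrue = {}"

primrec models :: "'f set \<Rightarrow> 'f form \<Rightarrow> bool" where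
  "models p (FVar x) = (x \<in> p)"
| "models p (FNot a) = (\<not> models p a)"
| "models p (FAnd a b) = (models p a \<and> models p b)"
| "models p (FOr a b) = (models p a \<or> models p b)"
| "models p FFalse = False"
| "models p FTrue = True"

definition FImp :: "'f form \<Rightarrow> 'f form \<Rightarrow> 'f form" where
  "FImp a b = FOr (FNot a) b"

definition FIff :: "'f form \<Rightarrow> 'f form \<Rightarrow> 'f form" where
  "FIff a b = FAnd (FImp a b) (FImp b a)"

definition FDisj :: "'f form list \<Rightarrow> 'f form" where
  "FDisj xs = foldr FOr xs FFalse"

definition entails :: "'f form \<Rightarrow> 'f form \<Rightarrow> bool" where
  "entails \<theta> \<theta>' = (\<forall>p. models p (FImp \<theta> \<theta>'))"

section \<open>Syntax of LC, parametric in the annotation of annotable fragments\<close>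

type_synonym sname = string
type_synonym mname = string
type_synonym fname = string
type_synonym vname = string

datatype ty = TInt | TVoid | TStruct sname

datatype uop = UNeg | UNot
datatype bop = BPlus | BMinus | BMul | BDiv | BAnd | BOr | BLt | BLe | BGt | BGe | BEq | BNe

text \<open>Annotable occurrences (function-call arguments, sequence elements) carry an
  annotation of type 'a.  Plain LC uses 'a = unit; CLC uses 'a = 'f form
  (an unannotated occurrence carries FTrue).\<close>
datatype 'a expr =
    Lit int
  | Null
  | Par vname
  | App fname "('a \<times> 'a expr) list"
  | Member "'a expr" mname
  | Assign "'a expr" mname "'a expr"
  | Cond "'a expr" "'a expr" "'a expr"
  | Seq "('a \<times> 'a expr) list"
  | Uop uop "'a expr"
  | Bop bop "'a expr" "'a expr"
  | Malloc sname
  | Mfree "'a expr"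

text \<open>struct s { T1 m1; ...; Tk mk; } with annotation of the definition and of each member.\<close>
datatype 'a sdef = SDef (s_ann: 'a) (s_name: sname) (s_mems: "('a \<times> ty \<times> mname) list")

text \<open>T0 f(T1 x1, ..., Tk xk) { return e; } with annotation of the definition and of each parameter.\<close>
datatype 'a fdef = FDef (f_ann: 'a) (f_ret: ty) (f_name: fname)
  (f_pars: "('a \<times> ty \<times> vname) list") (f_body: "'a expr")

datatype 'a prog = Prog (p_structs: "'a sdef list") (p_funs: "'a fdef list")

type_synonym lc_prog = "unit prog"
type_synonym 'f clc_prog = "'f form prog"

definition lookup_struct :: "'a prog \<Rightarrow> sname \<Rightarrow> 'a sdef option" where
  "lookup_struct P s = find (\<lambda>d. s_name d = s) (p_structs P)"

definition lookup_fun :: "'a prog \<Rightarrow> fname \<Rightarrow> 'a fdef option" where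
  "lookup_fun P f = find (\<lambda>d. f_name d = f) (p_funs P)"

definition lookup_member :: "'a prog \<Rightarrow> sname \<Rightarrow> mname \<Rightarrow> ('a \<times> ty) option" where
  "lookup_member P s m =
     (case lookup_struct P s of
        None \<Rightarrow> None
      | Some d \<Rightarrow> map_option (\<lambda>(a, T, _). (a, T)) (find (\<lambda>(a, T, m'). m' = m) (s_mems d)))"

definition struct_dom :: "'a prog \<Rightarrow> sname set" where
  "struct_dom P = set (map s_name (p_structs P))"

fun wf_expr :: "'a expr \<Rightarrow> bool" where
  "wf_expr (App f args) = (\<forall>ae \<in> set args. wf_expr (snd ae))"
| "wf_expr (Member e m) = wf_expr e"
| "wf_expr (Assign e m e') = (wf_expr e \<and> wf_expr e')"
| "wf_expr (Cond e1 e2 e3) = (wf_expr e1 \<and> wf_expr e2 \<and> wf_expr e3)"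
| "wf_expr (Seq es) = (es \<noteq> [] \<and> (\<forall>ae \<in> set es. wf_expr (snd ae)))"
| "wf_expr (Uop u e) = wf_expr e"
| "wf_expr (Bop b e e') = (wf_expr e \<and> wf_expr e')"
| "wf_expr (Mfree e) = wf_expr e"
| "wf_expr _ = True"

definition wf_prog :: "'a prog \<Rightarrow> bool" where
  "wf_prog P =
     (distinct (map s_name (p_structs P)) \<and>
      distinct (map f_name (p_funs P)) \<and>
      (\<forall>d \<in> set (p_structs P). distinct (map (\<lambda>(a, T, m). m) (s_mems d))) \<and>
      (\<forall>d \<in> set (p_funs P). distinct (map (\<lambda>(a, T, x). x) (f_pars d)) \<and> wf_expr (f_body d)))"

primrec ty_structs :: "ty \<Rightarrow> sname set" where
  "ty_structs TInt = {}"
| "ty_structs TVoid = {}"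
| "ty_structs (TStruct s) = {s}"

fun expr_structs :: "'a expr \<Rightarrow> sname set" where
  "expr_structs (App f args) = (\<Union>ae \<in> set args. expr_structs (snd ae))"
| "expr_structs (Member e m) = expr_structs e"
| "expr_structs (Assign e m e') = expr_structs e \<union> expr_structs e'"
| "expr_structs (Cond e1 e2 e3) = expr_structs e1 \<union> expr_structs e2 \<union> expr_structs e3"
| "expr_structs (Seq es) = (\<Union>ae \<in> set es. expr_structs (snd ae))"
| "expr_structs (Uop u e) = expr_structs e"
| "expr_structs (Bop b e e') = expr_structs e \<union> expr_structs e'"
| "expr_structs (Malloc s) = {s}"
| "expr_structs (Mfree e) = expr_structs e"
| "expr_structs _ = {}"

fun expr_funs :: "'a expr \<Rightarrow> fname set" where
  "expr_funs (App f args) = insert f (\<Union>ae \<in> set args. expr_funs (snd ae))"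
| "expr_funs (Member e m) = expr_funs e"
| "expr_funs (Assign e m e') = expr_funs e \<union> expr_funs e'"
| "expr_funs (Cond e1 e2 e3) = expr_funs e1 \<union> expr_funs e2 \<union> expr_funs e3"
| "expr_funs (Seq es) = (\<Union>ae \<in> set es. expr_funs (snd ae))"
| "expr_funs (Uop u e) = expr_funs e"
| "expr_funs (Bop b e e') = expr_funs e \<union> expr_funs e'"
| "expr_funs (Mfree e) = expr_funs e"
| "expr_funs _ = {}"

definition prog_structs :: "'a prog \<Rightarrow> sname set" where
  "prog_structs P =
     (\<Union>d \<in> set (p_structs P). insert (s_name d) (\<Union>(a, T, m) \<in> set (s_mems d). ty_structs T)) \<union>
     (\<Union>d \<in> set (p_funs P). ty_structs (f_ret d) \<union> (\<Union>(a, T, x) \<in> set (f_pars d). ty_structs T)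
                              \<union> expr_structs (f_body d))"

definition fun_dom :: "'a prog \<Rightarrow> fname set" where
  "fun_dom P = set (map f_name (p_funs P))"

definition sane :: "'a prog \<Rightarrow> bool" where
  "sane P =
     (prog_structs P \<subseteq> struct_dom P \<and>
      (\<Union>d \<in> set (p_funs P). insert (f_name d) (expr_funs (f_body d))) \<subseteq> fun_dom P \<and>
      (\<exists>a e. lookup_fun P ''main'' = Some (FDef a TInt ''main'' [] e)))"

definition subty :: "'a prog \<Rightarrow> ty \<Rightarrow> ty \<Rightarrow> bool" where
  "subty P T1 T2 = (T1 = T2 \<or> (\<exists>s. T1 = TVoid \<and> T2 = TStruct s \<and> s \<in> struct_dom P))"

text \<open>T3 = max_<= {T1, T2} (only defined for comparable T1, T2).\<close>
definition is_max :: "'a prog \<Rightarrow> ty \<Rightarrow> ty \<Rightarrow> ty \<Rightarrow> bool" where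
  "is_max P T1 T2 T3 = ((subty P T1 T2 \<and> T3 = T2) \<or> (subty P T2 T1 \<and> T3 = T1))"

primrec uop_ok :: "uop \<Rightarrow> ty \<Rightarrow> bool" where
  "uop_ok UNeg T = (T = TInt)"
| "uop_ok UNot T = True"

fun bop_ok :: "bop \<Rightarrow> ty \<Rightarrow> bool" where
  "bop_ok BEq T = True"
| "bop_ok BNe T = True"
| "bop_ok _ T = (T = TInt)"

section \<open>LC typing\<close>

inductive lc_typ :: "lc_prog \<Rightarrow> (vname \<rightharpoonup> ty) \<Rightarrow> unit expr \<Rightarrow> ty \<Rightarrow> bool" for P where
  T_int: "lc_typ P \<Gamma> (Lit n) TInt"
| T_null: "lc_typ P \<Gamma> Null TVoid"
| T_par: "\<Gamma> x = Some T \<Longrightarrow> lc_typ P \<Gamma> (Par x) T"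
| T_app: "lookup_fun P f = Some (FDef a T0 f pars body) \<Longrightarrow>
          list_all2 (\<lambda>arg par. \<exists>T'. lc_typ P \<Gamma> (snd arg) T' \<and> subty P T' (fst (snd par))) args pars \<Longrightarrow>
          lc_typ P \<Gamma> (App f args) T0"
| T_member: "lc_typ P \<Gamma> e0 (TStruct s) \<Longrightarrow> lookup_member P s m = Some (a, T) \<Longrightarrow>
          lc_typ P \<Gamma> (Member e0 m) T"
| T_assign: "lc_typ P \<Gamma> e0 (TStruct s) \<Longrightarrow> lookup_member P s m = Some (a, T) \<Longrightarrow>
          lc_typ P \<Gamma> e1 T1 \<Longrightarrow> subty P T1 T \<Longrightarrow>
          lc_typ P \<Gamma> (Assign e0 m e1) T"
| T_cond: "lc_typ P \<Gamma> e0 T0 \<Longrightarrow> lc_typ P \<Gamma> e1 T1 \<Longrightarrow> lc_typ P \<Gamma> e2 T2 \<Longrightarrow>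
          is_max P T1 T2 T3 \<Longrightarrow> lc_typ P \<Gamma> (Cond e0 e1 e2) T3"
| T_seq: "es \<noteq> [] \<Longrightarrow> list_all2 (\<lambda>el T. lc_typ P \<Gamma> (snd el) T) es Ts \<Longrightarrow>
          lc_typ P \<Gamma> (Seq es) (last Ts)"
| T_uop: "lc_typ P \<Gamma> e0 T0 \<Longrightarrow> uop_ok u T0 \<Longrightarrow> lc_typ P \<Gamma> (Uop u e0) TInt"
| T_bop: "lc_typ P \<Gamma> e1 T1 \<Longrightarrow> lc_typ P \<Gamma> e2 T2 \<Longrightarrow> is_max P T1 T2 T3 \<Longrightarrow> bop_ok b T3 \<Longrightarrow>
          lc_typ P \<Gamma> (Bop b e1 e2) TInt"
| T_malloc: "s \<in> struct_dom P \<Longrightarrow> lc_typ P \<Gamma> (Malloc s) (TStruct s)"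
| T_mfree: "lc_typ P \<Gamma> e0 (TStruct s) \<Longrightarrow> lc_typ P \<Gamma> (Mfree e0) TVoid"
monos list_all2_mono

definition lc_fun_ok :: "lc_prog \<Rightarrow> unit fdef \<Rightarrow> bool" where
  "lc_fun_ok P d =
     (\<exists>T'. lc_typ P (map_of (map (\<lambda>(a, T, x). (x, T)) (f_pars d))) (f_body d) T'
           \<and> subty P T' (f_ret d))"

definition lc_prog_ok :: "lc_prog \<Rightarrow> bool" where
  "lc_prog_ok P = (sane P \<and> (\<forall>d \<in> set (p_funs P). lc_fun_ok P d))"

section \<open>CLC family-based typing\<close>

definition ty_ann :: "'f clc_prog \<Rightarrow> ty \<Rightarrow> 'f form" where
  "ty_ann P T = (case T of TStruct s \<Rightarrow>
                   (case lookup_struct P s of Some d \<Rightarrow> s_ann d | None \<Rightarrow> FTrue)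
                 | _ \<Rightarrow> FTrue)"

text \<open>neverLast(k, (e_1..e_n)) with 0-based index k.\<close>
definition neverLast :: "nat \<Rightarrow> 'f form list \<Rightarrow> 'f form" where
  "neverLast k as = FOr (FNot (as ! k)) (FDisj (drop (Suc k) as))"

inductive ft_typ :: "'f clc_prog \<Rightarrow> 'f form \<Rightarrow> (vname \<rightharpoonup> ty \<times> 'f form) \<Rightarrow> 'f form expr \<Rightarrow> ty \<Rightarrow> bool"
  for P where
  FT_int: "ft_typ P \<theta> \<Delta> (Lit n) TInt"
| FT_null: "ft_typ P \<theta> \<Delta> Null TVoid"
| FT_par: "\<Delta> x = Some (T, \<psi>) \<Longrightarrow> entails \<theta> \<psi> \<Longrightarrow> ft_typ P \<theta> \<Delta> (Par x) T"
| FT_app: "lookup_fun P f = Some (FDef a T0 f pars body) \<Longrightarrow> entails \<theta> a \<Longrightarrow>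
          list_all2 (\<lambda>arg par. \<exists>T'. ft_typ P \<theta> \<Delta> (snd arg) T' \<and> subty P T' (fst (snd par))
                                 \<and> entails \<theta> (FIff (fst arg) (fst par))) args pars \<Longrightarrow>
          ft_typ P \<theta> \<Delta> (App f args) T0"
| FT_member: "ft_typ P \<theta> \<Delta> e0 (TStruct s) \<Longrightarrow> lookup_member P s m = Some (a, T) \<Longrightarrow>
          entails \<theta> a \<Longrightarrow> ft_typ P \<theta> \<Delta> (Member e0 m) T"
| FT_assign: "ft_typ P \<theta> \<Delta> e0 (TStruct s) \<Longrightarrow> lookup_member P s m = Some (a, T) \<Longrightarrow>
          entails \<theta> a \<Longrightarrow> ft_typ P \<theta> \<Delta> e1 T1 \<Longrightarrow> subty P T1 T \<Longrightarrow>
          ft_typ P \<theta> \<Delta> (Assign e0 m e1) T"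
| FT_cond: "ft_typ P \<theta> \<Delta> e0 T0 \<Longrightarrow> ft_typ P \<theta> \<Delta> e1 T1 \<Longrightarrow> ft_typ P \<theta> \<Delta> e2 T2 \<Longrightarrow>
          is_max P T1 T2 T3 \<Longrightarrow> ft_typ P \<theta> \<Delta> (Cond e0 e1 e2) T3"
| FT_seq: "es \<noteq> [] \<Longrightarrow> entails \<theta> (FDisj (map fst es)) \<Longrightarrow>
          list_all2 (\<lambda>el T. ft_typ P (FAnd \<theta> (fst el)) \<Delta> (snd el) T) es Ts \<Longrightarrow>
          (\<forall>i < length es. Ts ! i \<noteq> last Ts \<longrightarrow> entails \<theta> (neverLast i (map fst es))) \<Longrightarrow>
          ft_typ P \<theta> \<Delta> (Seq es) (last Ts)"
| FT_uop: "ft_typ P \<theta> \<Delta> e0 T0 \<Longrightarrow> uop_ok u T0 \<Longrightarrow> ft_typ P \<theta> \<Delta> (Uop u e0) TInt"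
| FT_bop: "ft_typ P \<theta> \<Delta> e1 T1 \<Longrightarrow> ft_typ P \<theta> \<Delta> e2 T2 \<Longrightarrow> is_max P T1 T2 T3 \<Longrightarrow> bop_ok b T3 \<Longrightarrow>
          ft_typ P \<theta> \<Delta> (Bop b e1 e2) TInt"
| FT_malloc: "lookup_struct P s = Some d \<Longrightarrow> entails \<theta> (s_ann d) \<Longrightarrow>
          ft_typ P \<theta> \<Delta> (Malloc s) (TStruct s)"
| FT_mfree: "ft_typ P \<theta> \<Delta> e0 (TStruct s) \<Longrightarrow> ft_typ P \<theta> \<Delta> (Mfree e0) TVoid"
monos list_all2_mono

definition ft_struct_ok :: "'f clc_prog \<Rightarrow> 'f form \<Rightarrow> 'f form sdef \<Rightarrow> bool" where
  "ft_struct_ok P \<theta> d = (\<forall>(a, T, m) \<in> set (s_mems d). entails \<theta> (FImp a (ty_ann P T)))"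

definition ft_fun_ok :: "'f clc_prog \<Rightarrow> 'f form \<Rightarrow> 'f form fdef \<Rightarrow> bool" where
  "ft_fun_ok P \<theta> d =
     (entails \<theta> (ty_ann P (f_ret d)) \<and>
      (\<forall>(a, T, x) \<in> set (f_pars d). entails \<theta> (FImp a (ty_ann P T))) \<and>
      (\<exists>T'. ft_typ P \<theta> (map_of (map (\<lambda>(a, T, x). (x, (T, a))) (f_pars d))) (f_body d) T'
            \<and> subty P T' (f_ret d)))"

definition ft_prog_ok :: "'f form \<Rightarrow> 'f clc_prog \<Rightarrow> bool" where
  "ft_prog_ok \<phi> P =
     (sane P \<and>
      (\<exists>d. lookup_fun P ''main'' = Some d \<and> f_ann d = FTrue) \<and>
      (\<forall>d \<in> set (p_structs P). ft_struct_ok P (FAnd \<phi> (s_ann d)) d) \<and>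
      (\<forall>d \<in> set (p_funs P). ft_fun_ok P (FAnd \<phi> (f_ann d)) d))"

section \<open>Variant generation\<close>

definition keep :: "'f set \<Rightarrow> ('f form \<times> 'b) list \<Rightarrow> ('f form \<times> 'b) list" where
  "keep p xs = filter (\<lambda>(a, _). models p a) xs"

fun var_expr :: "'f set \<Rightarrow> 'f form expr \<Rightarrow> unit expr" where
  "var_expr p (Lit n) = Lit n"
| "var_expr p Null = Null"
| "var_expr p (Par x) = Par x"
| "var_expr p (App f args) = App f (map (\<lambda>(a, e). ((), e)) (keep p (map (\<lambda>(a, e). (a, var_expr p e)) args)))"
| "var_expr p (Member e m) = Member (var_expr p e) m"
| "var_expr p (Assign e m e') = Assign (var_expr p e) m (var_expr p e')"
| "var_expr p (Cond e1 e2 e3) = Cond (var_expr p e1) (var_expr p e2) (var_expr p e3)"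
| "var_expr p (Seq es) = Seq (map (\<lambda>(a, e). ((), e)) (keep p (map (\<lambda>(a, e). (a, var_expr p e)) es)))"
| "var_expr p (Uop u e) = Uop u (var_expr p e)"
| "var_expr p (Bop b e e') = Bop b (var_expr p e) (var_expr p e')"
| "var_expr p (Malloc s) = Malloc s"
| "var_expr p (Mfree e) = Mfree (var_expr p e)"

definition var_sdef :: "'f set \<Rightarrow> 'f form sdef \<Rightarrow> unit sdef" where
  "var_sdef p d = SDef () (s_name d) (map (\<lambda>(a, Tm). ((), Tm)) (keep p (s_mems d)))"

definition var_fdef :: "'f set \<Rightarrow> 'f form fdef \<Rightarrow> unit fdef" where
  "var_fdef p d = FDef () (f_ret d) (f_name d)
      (map (\<lambda>(a, Tx). ((), Tx)) (keep p (f_pars d))) (var_expr p (f_body d))"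

definition variant :: "'f set \<Rightarrow> 'f clc_prog \<Rightarrow> lc_prog" where
  "variant p P =
     Prog (map (var_sdef p) (filter (\<lambda>d. models p (s_ann d)) (p_structs P)))
          (map (var_fdef p) (filter (\<lambda>d. models p (f_ann d)) (p_funs P)))"

fun expr_anns :: "'a expr \<Rightarrow> 'a set" where
  "expr_anns (App f args) = (\<Union>ae \<in> set args. insert (fst ae) (expr_anns (snd ae)))"
| "expr_anns (Member e m) = expr_anns e"
| "expr_anns (Assign e m e') = expr_anns e \<union> expr_anns e'"
| "expr_anns (Cond e1 e2 e3) = expr_anns e1 \<union> expr_anns e2 \<union> expr_anns e3"
| "expr_anns (Seq es) = (\<Union>ae \<in> set es. insert (fst ae) (expr_anns (snd ae)))"
| "expr_anns (Uop u e) = expr_anns e"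
| "expr_anns (Bop b e e') = expr_anns e \<union> expr_anns e'"
| "expr_anns (Mfree e) = expr_anns e"
| "expr_anns _ = {}"

definition prog_anns :: "'a prog \<Rightarrow> 'a set" where
  "prog_anns P =
     (\<Union>d \<in> set (p_structs P). insert (s_ann d) (fst ` set (s_mems d))) \<union>
     (\<Union>d \<in> set (p_funs P). insert (f_ann d) (fst ` set (f_pars d)) \<union> expr_anns (f_body d))"

text \<open>The annotation table AT is
  represented by the annotations stored at the annotable occurrences of Prg.\<close>
definition is_spl :: "'f set \<Rightarrow> 'f form \<Rightarrow> 'f clc_prog \<Rightarrow> bool" where
  "is_spl F \<phi> P =
     (finite F \<and> fvars \<phi> \<subseteq> F \<and> (\<forall>a \<in> prog_anns P. fvars a \<subseteq> F) \<and> wf_prog P)"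

end

theory Submission
  imports Defs
begin

(* A family-based typing derivation is projected onto the valid product p.  Since p |= phi,
   p satisfies the context phi && AT(d) of every kept definition d, so each side condition
   theta |= psi of the family-based rules yields p |= psi; FT-seq types an element under
   theta && AT(e_i), which p satisfies exactly for the elements kept in the variant.
   Induction on the FT derivation thus gives an LC derivation of the projected expression
   with the same type, and that type is present in the variant, i.e. refers only to kept
   structs: FT-struct and FT-fun guarantee this for member, parameter and return types.
   The conditions AT(e_i) <=> AT(T_i x_i) of FT-app make arguments and parameters vanish
   together, and neverLast makes the last surviving element of a sequence carry the type
   of the whole sequence. *)

lemma find_map: "find P (map f xs) = map_option f (find (P \<circ> f) xs)"
  by (induction xs) auto

lemma find_filter: "find P (filter Q xs) = find (\<lambda>x. P x \<and> Q x) xs"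
  by (induction xs) auto

lemma find_Some_conj: "find P xs = Some x \<Longrightarrow> Q x \<Longrightarrow> find (\<lambda>x. P x \<and> Q x) xs = Some x"
  by (induction xs) (auto split: if_splits)

lemma find_SomeD: "find P xs = Some x \<Longrightarrow> x \<in> set xs \<and> P x"
  by (induction xs) (auto split: if_splits)

lemma find_eq_Some_ex_iff: "(\<exists>x. find P xs = Some x) \<longleftrightarrow> (\<exists>x\<in>set xs. P x)"
  by (metis find_None_iff find_SomeD not_None_eq)

lemma list_all2_mono_in_set:
  "list_all2 R xs ys \<Longrightarrow> (\<And>x y. x \<in> set xs \<Longrightarrow> y \<in> set ys \<Longrightarrow> R x y \<Longrightarrow> S x y) \<Longrightarrow>
   list_all2 S xs ys"
  by (auto simp: list_all2_conv_all_nth)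

lemma list_all2_left_ex: "list_all2 R xs ys \<Longrightarrow> x \<in> set xs \<Longrightarrow> \<exists>y. R x y"
  by (auto simp: list_all2_conv_all_nth in_set_conv_nth)

lemma list_all2_last: "list_all2 R xs ys \<Longrightarrow> ys \<noteq> [] \<Longrightarrow> R (last xs) (last ys)"
  by (induction rule: list_all2_induct) (auto simp: list_all2_conv_all_nth)

lemma list_all2_filter:
  "list_all2 R xs ys \<Longrightarrow> (\<And>x y. R x y \<Longrightarrow> A x \<longleftrightarrow> B y) \<Longrightarrow>
   list_all2 R (filter A xs) (filter B ys)"
  by (induction rule: list_all2_induct) auto

lemma list_all2_filter_zip:
  "list_all2 R xs ys \<Longrightarrow> list_all2 R (filter A xs) (map snd (filter (\<lambda>xy. A (fst xy)) (zip xs ys)))"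
  by (induction rule: list_all2_induct) auto

lemma last_filter_zip:
  assumes "length xs = length ys" and "\<exists>x\<in>set xs. A x"
    and "\<And>i. i < length xs \<Longrightarrow> A (xs ! i) \<Longrightarrow> ys ! i \<noteq> last ys \<Longrightarrow> \<exists>x\<in>set (drop (Suc i) xs). A x"
  shows "last (map snd (filter (\<lambda>xy. A (fst xy)) (zip xs ys))) = last ys"
  using assms
proof (induction xs ys rule: list_induct2)
  case Nil
  then show ?case by simp
next
  case (Cons x xs y ys)
  show ?case
  proof (cases "\<exists>x\<in>set xs. A x")
    case True
    then have "ys \<noteq> []" using Cons.hyps by auto
    then have "last (map snd (filter (\<lambda>xy. A (fst xy)) (zip xs ys))) = last (y # ys)"
      using Cons.IH[OF True] Cons.prems(2)[of "Suc _"] by auto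
    moreover from True obtain x' y' where "(x', y') \<in> set (zip xs ys)" "A x'"
      using Cons.hyps by (metis in_set_impl_in_set_zip1)
    then have "filter (\<lambda>xy. A (fst xy)) (zip xs ys) \<noteq> []" by (force simp: filter_empty_conv)
    ultimately show ?thesis using \<open>ys \<noteq> []\<close> by simp
  next
    case False
    then have "A x" and "filter (\<lambda>xy. A (fst xy)) (zip xs ys) = []"
      using Cons.prems(1) by (auto simp: filter_empty_conv dest: set_zip_leftD)
    moreover have "y = last (y # ys)"
      using Cons.prems(2)[of 0] False \<open>A x\<close> by (auto intro: ccontr)
    ultimately show ?thesis by simp
  qed
qed

lemma models_if_entails: "entails \<theta> \<psi> \<Longrightarrow> models p \<theta> \<Longrightarrow> models p \<psi>"
  by (auto simp: entails_def FImp_def)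

lemma models_FImp [simp]: "models p (FImp a b) \<longleftrightarrow> (models p a \<longrightarrow> models p b)"
  by (simp add: FImp_def)

lemma models_FIff [simp]: "models p (FIff a b) \<longleftrightarrow> (models p a \<longleftrightarrow> models p b)"
  by (auto simp: FIff_def)

lemma models_FDisj [simp]: "models p (FDisj xs) \<longleftrightarrow> (\<exists>x\<in>set xs. models p x)"
  by (induction xs) (auto simp: FDisj_def)

lemma models_neverLast:
  "models p (neverLast i as) \<longleftrightarrow> (models p (as ! i) \<longrightarrow> (\<exists>a\<in>set (drop (Suc i) as). models p a))"
  by (auto simp: neverLast_def)

lemma struct_dom_iff_lookup_struct: "s \<in> struct_dom P \<longleftrightarrow> (\<exists>d. lookup_struct P s = Some d)"
  by (auto simp: struct_dom_def lookup_struct_def find_eq_Some_ex_iff)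

lemma fun_dom_iff_lookup_fun: "f \<in> fun_dom P \<longleftrightarrow> (\<exists>d. lookup_fun P f = Some d)"
  by (auto simp: fun_dom_def lookup_fun_def find_eq_Some_ex_iff)

lemma lookup_struct_SomeD: "lookup_struct P s = Some d \<Longrightarrow> d \<in> set (p_structs P) \<and> s_name d = s"
  unfolding lookup_struct_def by (rule find_SomeD)

lemma lookup_fun_SomeD: "lookup_fun P f = Some d \<Longrightarrow> d \<in> set (p_funs P) \<and> f_name d = f"
  unfolding lookup_fun_def by (rule find_SomeD)

lemma lookup_member_SomeD:
  "lookup_member P s m = Some (a, T) \<Longrightarrow>
   \<exists>d. lookup_struct P s = Some d \<and> find (\<lambda>(a, T, m'). m' = m) (s_mems d) = Some (a, T, m)"
  unfolding lookup_member_def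
  by (auto split: option.splits dest: find_SomeD[where P = "\<lambda>(a, T, m'). m' = m"])

lemma lc_typ_wf_defined:
  "lc_typ P \<Gamma> e T \<Longrightarrow> wf_expr e \<and> expr_structs e \<subseteq> struct_dom P \<and> expr_funs e \<subseteq> fun_dom P"
proof (induction rule: lc_typ.induct)
  case (T_app f a T0 pars body \<Gamma> args)
  have "wf_expr (snd arg) \<and> expr_structs (snd arg) \<subseteq> struct_dom P \<and> expr_funs (snd arg) \<subseteq> fun_dom P"
    if "arg \<in> set args" for arg
    using list_all2_left_ex[OF T_app.IH that] by blast
  moreover have "f \<in> fun_dom P"
    using T_app.hyps(1) by (auto simp: fun_dom_iff_lookup_fun)
  ultimately show ?case by auto
next
  case (T_seq es \<Gamma> Ts)
  have "wf_expr (snd el) \<and> expr_structs (snd el) \<subseteq> struct_dom P \<and> expr_funs (snd el) \<subseteq> fun_dom P"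
    if "el \<in> set es" for el
    using list_all2_left_ex[OF T_seq.IH that] by blast
  then show ?case using T_seq.hyps(1) by auto
qed auto

lemma lc_fun_ok_wf_defined:
  "lc_fun_ok P d \<Longrightarrow>
   wf_expr (f_body d) \<and> expr_structs (f_body d) \<subseteq> struct_dom P \<and> expr_funs (f_body d) \<subseteq> fun_dom P"
  unfolding lc_fun_ok_def using lc_typ_wf_defined by blast

lemma keep_eq_filter: "keep p xs = filter (\<lambda>x. models p (fst x)) xs"
  by (simp add: keep_def case_prod_unfold)

lemma keep_map_snd: "keep p (map (\<lambda>(a, e). (a, g e)) xs) = map (\<lambda>(a, e). (a, g e)) (keep p xs)"
  by (induction xs) (auto simp: keep_def)

lemma var_expr_App:
  "var_expr p (App f args) = App f (map (\<lambda>(a, e). ((), var_expr p e)) (keep p args))"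
  by (simp only: var_expr.simps keep_map_snd) (simp add: case_prod_unfold)

lemma var_expr_Seq:
  "var_expr p (Seq es) = Seq (map (\<lambda>(a, e). ((), var_expr p e)) (keep p es))"
  by (simp only: var_expr.simps keep_map_snd) (simp add: case_prod_unfold)

lemma set_p_structs_variant:
  "set (p_structs (variant p P)) = var_sdef p ` {d \<in> set (p_structs P). models p (s_ann d)}"
  by (auto simp: variant_def)

lemma set_p_funs_variant:
  "set (p_funs (variant p P)) = var_fdef p ` {d \<in> set (p_funs P). models p (f_ann d)}"
  by (auto simp: variant_def)

lemma lookup_struct_variant:
  "lookup_struct P s = Some d \<Longrightarrow> models p (s_ann d) \<Longrightarrow>
   lookup_struct (variant p P) s = Some (var_sdef p d)"
  unfolding lookup_struct_def variant_def
  by (simp add: find_map find_filter o_def var_sdef_def find_Some_conj)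

lemma lookup_fun_variant:
  "lookup_fun P f = Some d \<Longrightarrow> models p (f_ann d) \<Longrightarrow>
   lookup_fun (variant p P) f = Some (var_fdef p d)"
  unfolding lookup_fun_def variant_def
  by (simp add: find_map find_filter o_def var_fdef_def find_Some_conj)

lemma lookup_member_variant:
  assumes "lookup_member P s m = Some (a, T)" and "models p a"
    and "lookup_struct P s = Some d" and "models p (s_ann d)"
  shows "lookup_member (variant p P) s m = Some ((), T)"
proof -
  have "find (\<lambda>(a, T, m'). m' = m) (s_mems d) = Some (a, T, m)"
    using lookup_member_SomeD[OF assms(1)] assms(3) by auto
  then have "find (\<lambda>x. (case x of (a, T, m') \<Rightarrow> m' = m) \<and> models p (fst x)) (s_mems d)
      = Some (a, T, m)"
    by (rule find_Some_conj) (simp add: assms(2))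
  then show ?thesis
    using assms(3,4)
    by (simp add: lookup_member_def lookup_struct_variant var_sdef_def keep_eq_filter find_map
        find_filter o_def case_prod_unfold)
qed

definition ty_present :: "'f clc_prog \<Rightarrow> 'f set \<Rightarrow> ty \<Rightarrow> bool" where
  "ty_present P p T \<longleftrightarrow> (\<forall>s. T = TStruct s \<longrightarrow> (\<exists>d. lookup_struct P s = Some d \<and> models p (s_ann d)))"

lemma ty_present_TInt [simp]: "ty_present P p TInt"
  and ty_present_TVoid [simp]: "ty_present P p TVoid"
  by (simp_all add: ty_present_def)

lemma ty_structs_subset_struct_dom_variant:
  "ty_present P p T \<Longrightarrow> ty_structs T \<subseteq> struct_dom (variant p P)"
  by (cases T) (auto simp: ty_present_def struct_dom_iff_lookup_struct dest: lookup_struct_variant)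

lemma subty_variant: "subty P T1 T2 \<Longrightarrow> ty_present P p T2 \<Longrightarrow> subty (variant p P) T1 T2"
  unfolding subty_def using ty_structs_subset_struct_dom_variant by fastforce

lemma is_max_variant:
  "is_max P T1 T2 T3 \<Longrightarrow> ty_present P p T1 \<Longrightarrow> ty_present P p T2 \<Longrightarrow>
   is_max (variant p P) T1 T2 T3 \<and> ty_present P p T3"
  unfolding is_max_def using subty_variant by blast

lemma ty_present_if_models_ty_ann:
  "ty_structs T \<subseteq> struct_dom P \<Longrightarrow> models p (ty_ann P T) \<Longrightarrow> ty_present P p T"
  by (cases T) (auto simp: ty_present_def ty_ann_def struct_dom_iff_lookup_struct)

(* The bodies need their own argument: dropping elements may empty a sequence. *)
lemma wf_prog_variant:
  assumes "wf_prog P" and "\<forall>d\<in>set (p_funs (variant p P)). wf_expr (f_body d)"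
  shows "wf_prog (variant p P)"
  using assms unfolding wf_prog_def
  by (simp add: variant_def var_sdef_def var_fdef_def keep_eq_filter o_def case_prod_unfold
      distinct_map_filter)

definition env_compatible ::
    "'f clc_prog \<Rightarrow> 'f set \<Rightarrow> (vname \<rightharpoonup> ty \<times> 'f form) \<Rightarrow> (vname \<rightharpoonup> ty) \<Rightarrow> bool" where
  "env_compatible P p \<Delta> \<Gamma> \<longleftrightarrow>
     (\<forall>x T \<psi>. \<Delta> x = Some (T, \<psi>) \<longrightarrow> models p \<psi> \<longrightarrow> \<Gamma> x = Some T \<and> ty_present P p T)"

lemma env_compatible_params:
  assumes "\<forall>(a, T, x) \<in> set ps. models p a \<longrightarrow> ty_present P p T"
  shows "env_compatible P p (map_of (map (\<lambda>(a, T, x). (x, (T, a))) ps))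
           (map_of (map (\<lambda>(a, T, x). (x, T)) (map (\<lambda>(a, Tx). ((), Tx)) (keep p ps))))"
  using assms by (induction ps) (auto simp: env_compatible_def keep_def split: if_splits)

lemma lc_typ_variant_Seq:
  assumes typed: "list_all2 (\<lambda>el T. models p (fst el) \<longrightarrow>
                     lc_typ (variant p P) \<Gamma> (var_expr p (snd el)) T \<and> ty_present P p T) es Ts"
    and some_kept: "\<exists>el\<in>set es. models p (fst el)"
    and never_last: "\<And>i. i < length es \<Longrightarrow> models p (fst (es ! i)) \<Longrightarrow> Ts ! i \<noteq> last Ts \<Longrightarrow>
                       \<exists>el\<in>set (drop (Suc i) es). models p (fst el)"
  shows "lc_typ (variant p P) \<Gamma> (var_expr p (Seq es)) (last Ts) \<and> ty_present P p (last Ts)"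
proof -
  let ?Ts = "map snd (filter (\<lambda>xy. models p (fst (fst xy))) (zip es Ts))"
  have kept_typed:
    "list_all2 (\<lambda>el T. lc_typ (variant p P) \<Gamma> (var_expr p (snd el)) T \<and> ty_present P p T)
       (keep p es) ?Ts"
    using list_all2_filter_zip[OF typed] unfolding keep_eq_filter
    by (rule list_all2_mono_in_set) auto
  have "keep p es \<noteq> []"
    using some_kept by (auto simp: keep_def filter_empty_conv)
  then have "?Ts \<noteq> []"
    using list_all2_lengthD[OF kept_typed] by (metis length_0_conv)
  have "last ?Ts = last Ts"
    using list_all2_lengthD[OF typed] some_kept never_last by (rule last_filter_zip)
  moreover have "lc_typ (variant p P) \<Gamma> (var_expr p (Seq es)) (last ?Ts)"
    unfolding var_expr_Seq using \<open>keep p es \<noteq> []\<close> kept_typed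
    by (intro lc_typ.T_seq) (auto simp: list_all2_map1 case_prod_unfold elim: list_all2_mono)
  moreover have "ty_present P p (last ?Ts)"
    using list_all2_last[OF kept_typed \<open>?Ts \<noteq> []\<close>] ..
  ultimately show ?thesis by simp
qed

locale ft_typed_product =
  fixes \<phi> :: "'f form" and P :: "'f clc_prog" and p :: "'f set"
  assumes ft_prog_ok: "ft_prog_ok \<phi> P" and valid_product: "models p \<phi>"
begin

lemma prog_sane: "sane P"
  using ft_prog_ok by (simp add: ft_prog_ok_def)

lemma ty_present_if_models_prog_ty_ann:
  "ty_structs T \<subseteq> prog_structs P \<Longrightarrow> models p (ty_ann P T) \<Longrightarrow> ty_present P p T"
  using prog_sane by (auto simp: sane_def intro: ty_present_if_models_ty_ann)

lemma member_ty_present: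
  assumes "d \<in> set (p_structs P)" and "models p (s_ann d)"
    and "(a, T, m) \<in> set (s_mems d)" and "models p a"
  shows "ty_present P p T"
proof (rule ty_present_if_models_prog_ty_ann)
  show "ty_structs T \<subseteq> prog_structs P"
    using assms(1,3) by (force simp: prog_structs_def)
  have "ft_struct_ok P (FAnd \<phi> (s_ann d)) d"
    using ft_prog_ok assms(1) by (simp add: ft_prog_ok_def)
  then show "models p (ty_ann P T)"
    using assms(2-4) valid_product by (auto simp: ft_struct_ok_def dest!: models_if_entails)
qed

lemma fun_tys_present:
  assumes "d \<in> set (p_funs P)" and "models p (f_ann d)"
  shows "ty_present P p (f_ret d)"
    and "(a, T, x) \<in> set (f_pars d) \<Longrightarrow> models p a \<Longrightarrow> ty_present P p T"
proof -
  have ok: "ft_fun_ok P (FAnd \<phi> (f_ann d)) d"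
    using ft_prog_ok assms(1) by (simp add: ft_prog_ok_def)
  have \<theta>: "models p (FAnd \<phi> (f_ann d))"
    using valid_product assms(2) by simp
  show "ty_present P p (f_ret d)"
  proof (rule ty_present_if_models_prog_ty_ann)
    show "ty_structs (f_ret d) \<subseteq> prog_structs P"
      using assms(1) by (force simp: prog_structs_def)
    show "models p (ty_ann P (f_ret d))"
      using ok \<theta> by (auto simp: ft_fun_ok_def dest: models_if_entails)
  qed
  assume par: "(a, T, x) \<in> set (f_pars d)" and "models p a"
  show "ty_present P p T"
  proof (rule ty_present_if_models_prog_ty_ann)
    show "ty_structs T \<subseteq> prog_structs P"
      using assms(1) par by (force simp: prog_structs_def)
    show "models p (ty_ann P T)"
      using ok \<theta> par \<open>models p a\<close> by (auto simp: ft_fun_ok_def dest!: models_if_entails)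
  qed
qed

lemma member_variant:
  assumes "lookup_member P s m = Some (a, T)" and "models p a" and "ty_present P p (TStruct s)"
  shows "lookup_member (variant p P) s m = Some ((), T) \<and> ty_present P p T"
proof -
  obtain d where d: "lookup_struct P s = Some d" "models p (s_ann d)"
    using assms(3) by (auto simp: ty_present_def)
  have "(a, T, m) \<in> set (s_mems d)"
    using lookup_member_SomeD[OF assms(1)] d(1) by (auto dest: find_SomeD)
  then show ?thesis
    using member_ty_present[OF _ d(2) _ assms(2)] lookup_member_variant[OF assms(1,2) d]
      lookup_struct_SomeD[OF d(1)] by blast
qed

lemma lc_typ_variant_App:
  assumes "lookup_fun P f = Some (FDef a T0 f pars body)" and "models p a"
    and args: "list_all2 (\<lambda>arg par. (models p (fst arg) \<longleftrightarrow> models p (fst par)) \<and>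
                 (models p (fst arg) \<longrightarrow>
                   (\<exists>T. lc_typ (variant p P) \<Gamma> (var_expr p (snd arg)) T
                        \<and> subty P T (fst (snd par))))) args pars"
      (is "list_all2 ?R _ _")
  shows "lc_typ (variant p P) \<Gamma> (var_expr p (App f args)) T0 \<and> ty_present P p T0"
proof -
  let ?d = "FDef a T0 f pars body"
  have d: "?d \<in> set (p_funs P)" "models p (f_ann ?d)"
    using assms(1,2) by (auto dest: lookup_fun_SomeD)
  have "list_all2 ?R (keep p args) (keep p pars)"
    using args unfolding keep_eq_filter by (rule list_all2_filter) blast
  then have "list_all2 (\<lambda>arg par. \<exists>T. lc_typ (variant p P) \<Gamma> (var_expr p (snd arg)) T
                                  \<and> subty (variant p P) T (fst (snd par)))
                (keep p args) (keep p pars)"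
    by (rule list_all2_mono_in_set)
      (use fun_tys_present(2)[OF d] in \<open>force simp: keep_def intro: subty_variant\<close>)
  moreover have "lookup_fun (variant p P) f = Some (var_fdef p ?d)"
    using lookup_fun_variant[OF assms(1)] d(2) by simp
  ultimately have "lc_typ (variant p P) \<Gamma> (var_expr p (App f args)) T0"
    unfolding var_expr_App
    by (auto simp: var_fdef_def list_all2_map1 list_all2_map2 case_prod_unfold intro: lc_typ.T_app)
  then show ?thesis
    using fun_tys_present(1)[OF d] by simp
qed

lemma ft_typ_variant:
  assumes "ft_typ P \<theta> \<Delta> e T" and "env_compatible P p \<Delta> \<Gamma>" and "models p \<theta>"
  shows "lc_typ (variant p P) \<Gamma> (var_expr p e) T \<and> ty_present P p T"
  using assms
proof (induction rule: ft_typ.induct)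
  case (FT_par \<Delta> x T \<psi> \<theta>)
  then have "models p \<psi>" by (auto dest: models_if_entails)
  then show ?case using FT_par by (auto simp: env_compatible_def intro: lc_typ.T_par)
next
  case (FT_app f a T0 pars body \<theta> \<Delta> args)
  have "models p a"
    using FT_app.hyps(2) FT_app.prems(2) by (rule models_if_entails)
  moreover have "list_all2 (\<lambda>arg par. (models p (fst arg) \<longleftrightarrow> models p (fst par)) \<and>
      (models p (fst arg) \<longrightarrow>
        (\<exists>T. lc_typ (variant p P) \<Gamma> (var_expr p (snd arg)) T \<and> subty P T (fst (snd par)))))
      args pars"
    using FT_app.IH by (rule list_all2_mono) (use FT_app.prems in \<open>auto dest: models_if_entails\<close>)
  ultimately show ?case
    by (rule lc_typ_variant_App[OF FT_app.hyps(1)])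
next
  case (FT_member \<theta> \<Delta> e0 s m a T)
  then show ?case
    using member_variant[OF FT_member.hyps(2)]
    by (auto dest: models_if_entails intro: lc_typ.T_member)
next
  case (FT_assign \<theta> \<Delta> e0 s m a T e1 T1)
  then show ?case
    using member_variant[OF FT_assign.hyps(2)]
    by (auto dest: models_if_entails subty_variant intro: lc_typ.T_assign)
next
  case (FT_cond \<theta> \<Delta> e0 T0 e1 T1 e2 T2 T3)
  then show ?case using is_max_variant[OF FT_cond.hyps(4)] by (auto intro: lc_typ.T_cond)
next
  case (FT_seq es \<theta> \<Delta> Ts)
  have "list_all2 (\<lambda>el T. models p (fst el) \<longrightarrow>
      lc_typ (variant p P) \<Gamma> (var_expr p (snd el)) T \<and> ty_present P p T) es Ts"
    using FT_seq.IH by (rule list_all2_mono) (use FT_seq.prems in auto)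
  moreover have "\<exists>el\<in>set es. models p (fst el)"
    using models_if_entails[OF FT_seq.hyps(2) FT_seq.prems(2)] by simp
  moreover have "\<exists>el\<in>set (drop (Suc i) es). models p (fst el)"
    if "i < length es" "models p (fst (es ! i))" "Ts ! i \<noteq> last Ts" for i
    using that FT_seq.hyps(3) FT_seq.prems(2)
    by (force simp: models_neverLast drop_map dest: models_if_entails)
  ultimately show ?case
    by (rule lc_typ_variant_Seq)
next
  case (FT_uop \<theta> \<Delta> e0 T0 u)
  then show ?case by (auto intro: lc_typ.T_uop)
next
  case (FT_bop \<theta> \<Delta> e1 T1 e2 T2 T3 b)
  then show ?case using is_max_variant[OF FT_bop.hyps(3)] by (auto intro: lc_typ.T_bop)
next
  case (FT_malloc s d \<theta> \<Delta>)
  then have "ty_present P p (TStruct s)"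
    by (auto simp: ty_present_def dest: models_if_entails)
  then show ?case
    using ty_structs_subset_struct_dom_variant[of P p "TStruct s"] by (auto intro: lc_typ.T_malloc)
next
  case (FT_mfree \<theta> \<Delta> e0 s)
  then show ?case by (auto intro: lc_typ.T_mfree)
qed (auto intro: lc_typ.intros)

lemma lc_fun_ok_variant:
  assumes "d \<in> set (p_funs P)" and "models p (f_ann d)"
  shows "lc_fun_ok (variant p P) (var_fdef p d)"
proof -
  let ?\<Delta> = "map_of (map (\<lambda>(a, T, x). (x, (T, a))) (f_pars d))"
  let ?\<Gamma> = "map_of (map (\<lambda>(a, T, x). (x, T)) (f_pars (var_fdef p d)))"
  obtain T where body: "ft_typ P (FAnd \<phi> (f_ann d)) ?\<Delta> (f_body d) T" and "subty P T (f_ret d)"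
    using ft_prog_ok assms(1) by (auto simp: ft_prog_ok_def ft_fun_ok_def)
  have "env_compatible P p ?\<Delta> ?\<Gamma>"
    unfolding var_fdef_def fdef.sel
    by (rule env_compatible_params) (use fun_tys_present(2)[OF assms] in blast)
  then have "lc_typ (variant p P) ?\<Gamma> (var_expr p (f_body d)) T"
    using ft_typ_variant[OF body] valid_product assms(2) by simp
  moreover have "subty (variant p P) T (f_ret d)"
    using \<open>subty P T (f_ret d)\<close> fun_tys_present(1)[OF assms] by (rule subty_variant)
  ultimately show ?thesis by (auto simp: lc_fun_ok_def var_fdef_def)
qed

lemma lc_fun_ok_variant_funs: "d \<in> set (p_funs (variant p P)) \<Longrightarrow> lc_fun_ok (variant p P) d"
  using lc_fun_ok_variant by (auto simp: set_p_funs_variant)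

lemma prog_structs_variant: "prog_structs (variant p P) \<subseteq> struct_dom (variant p P)"
proof -
  have "insert (s_name d) (\<Union>(a, T, m) \<in> set (s_mems d). ty_structs T) \<subseteq> struct_dom (variant p P)"
    if in_structs: "d \<in> set (p_structs (variant p P))" for d
  proof -
    obtain d0 where d0: "d0 \<in> set (p_structs P)" "models p (s_ann d0)" "d = var_sdef p d0"
      using in_structs by (auto simp: set_p_structs_variant)
    have "ty_structs T \<subseteq> struct_dom (variant p P)" if mem: "(a, T, m) \<in> set (s_mems d)" for a T m
    proof -
      obtain a0 where "(a0, T, m) \<in> set (s_mems d0)" "models p a0"
        using mem d0(3) by (auto simp: var_sdef_def keep_def)
      then show ?thesis
        using d0(1,2) by (intro ty_structs_subset_struct_dom_variant member_ty_present)
    qed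
    moreover have "s_name d \<in> struct_dom (variant p P)"
      using in_structs by (simp add: struct_dom_def)
    ultimately show ?thesis by blast
  qed
  moreover have "ty_structs (f_ret d) \<union> (\<Union>(a, T, x) \<in> set (f_pars d). ty_structs T) \<union>
      expr_structs (f_body d) \<subseteq> struct_dom (variant p P)"
    if in_funs: "d \<in> set (p_funs (variant p P))" for d
  proof -
    obtain d0 where d0: "d0 \<in> set (p_funs P)" "models p (f_ann d0)" "d = var_fdef p d0"
      using in_funs by (auto simp: set_p_funs_variant)
    have "f_ret d = f_ret d0"
      using d0(3) by (simp add: var_fdef_def)
    then have "ty_structs (f_ret d) \<subseteq> struct_dom (variant p P)"
      using d0(1,2) by (simp add: ty_structs_subset_struct_dom_variant fun_tys_present(1))
    moreover have "ty_structs T \<subseteq> struct_dom (variant p P)"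
      if par: "(a, T, x) \<in> set (f_pars d)" for a T x
    proof -
      obtain a0 where "(a0, T, x) \<in> set (f_pars d0)" "models p a0"
        using par d0(3) by (auto simp: var_fdef_def keep_def)
      then show ?thesis
        using d0(1,2) by (intro ty_structs_subset_struct_dom_variant fun_tys_present(2))
    qed
    moreover have "expr_structs (f_body d) \<subseteq> struct_dom (variant p P)"
      using lc_fun_ok_wf_defined[OF lc_fun_ok_variant_funs[OF in_funs]] by blast
    ultimately show ?thesis by blast
  qed
  ultimately show ?thesis
    unfolding prog_structs_def by (simp add: UN_subset_iff)
qed

lemma main_variant: "\<exists>a e. lookup_fun (variant p P) ''main'' = Some (FDef a TInt ''main'' [] e)"
proof -
  obtain d a e where "lookup_fun P ''main'' = Some d" "f_ann d = FTrue"
    and "lookup_fun P ''main'' = Some (FDef a TInt ''main'' [] e)"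
    using ft_prog_ok prog_sane by (auto simp: ft_prog_ok_def sane_def)
  then show ?thesis
    using lookup_fun_variant[of P "''main''" d p] by (auto simp: var_fdef_def keep_def)
qed

lemma sane_variant: "sane (variant p P)"
proof -
  have "insert (f_name d) (expr_funs (f_body d)) \<subseteq> fun_dom (variant p P)"
    if "d \<in> set (p_funs (variant p P))" for d
    using that lc_fun_ok_wf_defined[OF lc_fun_ok_variant_funs[OF that]] by (auto simp: fun_dom_def)
  then show ?thesis
    using prog_structs_variant main_variant by (auto simp: sane_def)
qed

end

theorem theorem4:
  fixes F :: "'f set" and \<phi> :: "'f form" and P :: "'f clc_prog" and p :: "'f set"
  assumes "is_spl F \<phi> P"
    and "p \<subseteq> F" and "models p \<phi>"
    and "ft_prog_ok \<phi> P"
  shows "wf_prog (variant p P) \<and> lc_prog_ok (variant p P)"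
proof -
  interpret ft_typed_product \<phi> P p
    using assms(3,4) by unfold_locales
  have "wf_prog P"
    using assms(1) by (simp add: is_spl_def)
  then have "wf_prog (variant p P)"
    using lc_fun_ok_wf_defined[OF lc_fun_ok_variant_funs] by (blast intro: wf_prog_variant)
  then show ?thesis
    using sane_variant lc_fun_ok_variant_funs by (simp add: lc_prog_ok_def)
qed

end
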